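(* Let $d,r$ be nonnegative integers with $1\le r\le\binom{m+d}{d}-r_d$. Then $\overline{e}_r(d,m)=\max|V(F_1,\dots,F_r)(\mathbb{F}_q)|$, where the maximum is over all sets $\{F_1,\dots,F_r\}$ of linearly independent projectively reduced homogeneous polynomials of degree $d$ in $\mathbb{F}_q[x_0,\dots,x_m]$ whose leading monomials $\mathrm{lm}(F_1),\dots,\mathrm{lm}(F_r)$ are distinct. Consequently, there is an integer $e_0$ such that $\overline{e}_r(d,m)\le A_r(d,m;e)$ for all $e\ge e_0$.
   Context: $q$ is a prime power, $\mathbb{F}_q$ the finite field with $q$ elements, $m$ a positive integer. A monomial $\mu\neq1$ in $x_0,\dots,x_m$ written $x_0^{a_0}\cdots x_k^{a_k}$ with $a_k>0$ is projectively reduced if $a_0,\dots,a_{k-1}\le q-1$; $1$ is projectively reduced; a polynomial is projectively reduced if it is an $\mathbb{F}_q$-linear combination of projectively reduced monomials. $\overline{\mathbb{M}}_e$ is the set of projectively reduced monomials of degree $e$. $r_d$ is the dimension of the degree-$d$ component of the ideal generated by $\{x_i^qx_j-x_ix_j^q:0\le i<j\le m\}$, so $|\overline{\mathbb{M}}_d|=\binom{m+d}{d}-r_d$. $V(F_1,\dots,F_r)(\mathbb{F}_q)$ is the set of points of $\mathbb{P}^m(\mathbb{F}_q)$ where all $F_i$ vanish. $\overline{e}_r(d,m)$ is the maximum of $|V(G_1,\dots,G_r)(\mathbb{F}_q)|$ over families of $r$ linearly independent projectively reduced homogeneous polynomials of degree $d$. Lexicographic order on monomials: $x_0^{b_0}\cdots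 x_m^{b_m}\prec x_0^{a_0}\cdots x_m^{a_m}$ iff at the first index where exponents differ $a_i>b_i$; $\mathrm{lm}(F)$ is the lexicographically largest monomial occurring in $F$ with nonzero coefficient. For a set $\mathcal{S}$ of monomials, $\Delta_e(\mathcal{S})=\{\mu\in\overline{\mathbb{M}}_e:\text{no }\nu\in\mathcal{S}\text{ divides }\mu\}$, and $A_r(d,m;e)=\max\{|\Delta_e(\mathcal{S})|:\mathcal{S}\subseteq\overline{\mathbb{M}}_d,|\mathcal{S}|=r\}$. *)

theory Defs
  imports Main HOL.Vector_Spaces "HOL-Library.Cardinality" "HOL-Library.Function_Algebras"
begin

(* Exponent vectors of monomials in x_0,...,x_m : functions nat => nat vanishing beyond m *)
definition mons :: "nat \<Rightarrow> (nat \<Rightarrow> nat) set" where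
  "mons m = {a. \<forall>i>m. a i = 0}"

definition mdeg :: "nat \<Rightarrow> (nat \<Rightarrow> nat) \<Rightarrow> nat" where
  "mdeg m a = (\<Sum>i\<le>m. a i)"

(* projectively reduced monomial (q = field size) *)
definition proj_reduced_mon :: "nat \<Rightarrow> nat \<Rightarrow> (nat \<Rightarrow> nat) \<Rightarrow> bool" where
  "proj_reduced_mon q m a \<longleftrightarrow> a \<in> mons m \<and>
     (a = (\<lambda>_. 0) \<or> (\<exists>k\<le>m. a k > 0 \<and> (\<forall>i>k. a i = 0) \<and> (\<forall>i<k. a i \<le> q - 1)))"

definition Mbar :: "nat \<Rightarrow> nat \<Rightarrow> nat \<Rightarrow> (nat \<Rightarrow> nat) set" where
  "Mbar q m e = {a. proj_reduced_mon q m a \<and> mdeg m a = e}"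

(* Polynomials: coefficient functions on exponent vectors *)
type_synonym 'a mpoly = "(nat \<Rightarrow> nat) \<Rightarrow> 'a"

definition psupp :: "'a::zero mpoly \<Rightarrow> (nat \<Rightarrow> nat) set" where
  "psupp F = {a. F a \<noteq> 0}"

definition mono :: "(nat \<Rightarrow> nat) \<Rightarrow> 'a::{zero,one} mpoly" where
  "mono a = (\<lambda>b. if b = a then 1 else 0)"

definition pr_hom :: "nat \<Rightarrow> nat \<Rightarrow> nat \<Rightarrow> 'a::zero mpoly \<Rightarrow> bool" where
  "pr_hom q m d F \<longleftrightarrow> psupp F \<subseteq> Mbar q m d"

definition peval :: "nat \<Rightarrow> 'a::comm_ring_1 mpoly \<Rightarrow> (nat \<Rightarrow> 'a) \<Rightarrow> 'a" where
  "peval m F x = (\<Sum>a\<in>psupp F. F a * (\<Prod>i\<le>m. x i ^ a i))"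

definition lin_indep_fam :: "nat \<Rightarrow> (nat \<Rightarrow> 'a::field mpoly) \<Rightarrow> bool" where
  "lin_indep_fam r F \<longleftrightarrow>
     (\<forall>c::nat \<Rightarrow> 'a. (\<lambda>a. \<Sum>i<r. c i * F i a) = (\<lambda>_. 0) \<longrightarrow> (\<forall>i<r. c i = 0))"

definition proj_space :: "'a::field itself \<Rightarrow> nat \<Rightarrow> (nat \<Rightarrow> 'a) set set" where
  "proj_space _ m =
     {x :: nat \<Rightarrow> 'a. (\<forall>i>m. x i = 0) \<and> x \<noteq> (\<lambda>_. 0)}
       // {(x, y). \<exists>c::'a. c \<noteq> 0 \<and> y = (\<lambda>i. c * x i)}"

definition zero_set :: "nat \<Rightarrow> nat \<Rightarrow> (nat \<Rightarrow> 'a::field mpoly) \<Rightarrow> (nat \<Rightarrow> 'a) set set" where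
  "zero_set m r F = {P \<in> proj_space TYPE('a) m. \<forall>x\<in>P. \<forall>i<r. peval m (F i) x = 0}"

definition lex_less :: "(nat \<Rightarrow> nat) \<Rightarrow> (nat \<Rightarrow> nat) \<Rightarrow> bool" where
  "lex_less b a \<longleftrightarrow> (\<exists>i. (\<forall>j<i. b j = a j) \<and> b i < a i)"

definition lm :: "'a::zero mpoly \<Rightarrow> (nat \<Rightarrow> nat)" where
  "lm F = (THE a. a \<in> psupp F \<and> (\<forall>b\<in>psupp F. b \<noteq> a \<longrightarrow> lex_less b a))"

definition ebar :: "'a::{finite,field} itself \<Rightarrow> nat \<Rightarrow> nat \<Rightarrow> nat \<Rightarrow> nat" where
  "ebar _ r d m = Max {card (zero_set m r F) | F :: nat \<Rightarrow> 'a mpoly.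
      lin_indep_fam r F \<and> (\<forall>i<r. pr_hom CARD('a) m d (F i))}"

(* r_d: dimension of the degree-d part of the ideal generated by x_i^q x_j - x_i x_j^q;
   this degree-d part is spanned by the products (monomial of degree d-q-1) * generator *)
definition ideal_gens_deg :: "'a::{finite,field} itself \<Rightarrow> nat \<Rightarrow> nat \<Rightarrow> 'a mpoly set" where
  "ideal_gens_deg _ m d =
     {(\<lambda>b. mono (\<lambda>k. a k + (if k = i then CARD('a) else 0) + (if k = j then 1 else 0)) b
          - mono (\<lambda>k. a k + (if k = i then 1 else 0) + (if k = j then CARD('a) else 0)) b)
       | a i j. a \<in> mons m \<and> mdeg m a + CARD('a) + 1 = d \<and> i < j \<and> j \<le> m}"

definition rdim :: "'a::{finite,field} itself \<Rightarrow> nat \<Rightarrow> nat \<Rightarrow> nat" where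
  "rdim T m d = vector_space.dim (\<lambda>(c::'a) (F::'a mpoly) a. c * F a) (ideal_gens_deg T m d)"

definition mdvd :: "(nat \<Rightarrow> nat) \<Rightarrow> (nat \<Rightarrow> nat) \<Rightarrow> bool" where
  "mdvd b a \<longleftrightarrow> (\<forall>i. b i \<le> a i)"

definition Delta :: "nat \<Rightarrow> nat \<Rightarrow> nat \<Rightarrow> (nat \<Rightarrow> nat) set \<Rightarrow> (nat \<Rightarrow> nat) set" where
  "Delta q m e S = {a \<in> Mbar q m e. \<not> (\<exists>b\<in>S. mdvd b a)}"

definition A_bound :: "nat \<Rightarrow> nat \<Rightarrow> nat \<Rightarrow> nat \<Rightarrow> nat \<Rightarrow> nat" where
  "A_bound q r d m e = Max {card (Delta q m e S) | S. S \<subseteq> Mbar q m d \<and> card S = r}"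

end

theory Submission
  imports Defs
begin

text \<open>
  Gaussian elimination along the lexicographic order turns a linearly independent family of
  projectively reduced forms into one with the same span, hence the same zero set, whose leading
  monomials are distinct; this gives the first claim.

  For the bound, take a maximising family \<open>G\<close> with distinct leading monomials \<open>S\<close> and zero
  set \<open>V\<close>. On \<open>V\<close> every monomial of degree \<open>e\<close> is a linear combination of monomials in
  \<open>Delta_e(S)\<close>: a multiple of \<open>lm(G_i)\<close> is rewritten through \<open>G_i = 0\<close> into lexicographically
  smaller terms, and a non-reduced monomial gets smaller by \<open>x_i^q x_k = x_i x_k^q\<close>. Once
  \<open>e + 1 \<ge> |V|\<close>, products of \<open>e\<close> linear forms separate each point of \<open>V\<close> from the others, so
  the \<open>|V|\<close> indicator functions of points of \<open>V\<close> lie in a space spanned by \<open>|Delta_e(S)|\<close>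
  functions. Hence \<open>|V| \<le> |Delta_e(S)| \<le> A_r(d,m;e)\<close>.
\<close>

section \<open>Lexicographic order and leading monomials\<close>

lemma lex_less_irrefl: "\<not> lex_less a a"
  unfolding lex_less_def by auto

lemma lex_less_trans:
  assumes "lex_less a b" "lex_less b c"
  shows "lex_less a c"
proof -
  obtain i where i: "\<forall>k<i. a k = b k" "a i < b i"
    using assms(1) unfolding lex_less_def by blast
  obtain j where j: "\<forall>k<j. b k = c k" "b j < c j"
    using assms(2) unfolding lex_less_def by blast
  have "(\<forall>k<min i j. a k = c k) \<and> a (min i j) < c (min i j)"
    using i j by (cases i j rule: linorder_cases) auto
  then show ?thesis
    unfolding lex_less_def by blast
qed

lemma lex_less_asym: "lex_less a b \<Longrightarrow> \<not> lex_less b a"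
  using lex_less_irrefl lex_less_trans by blast

lemma lex_less_linear:
  assumes "a \<noteq> b"
  shows "lex_less a b \<or> lex_less b a"
proof -
  define i where "i = (LEAST i. a i \<noteq> b i)"
  have "\<exists>i. a i \<noteq> b i"
    using assms by (auto simp: fun_eq_iff)
  then have "a i < b i \<or> b i < a i"
    unfolding i_def by (meson LeastI_ex linorder_neqE_nat)
  moreover have "\<forall>k<i. a k = b k"
    unfolding i_def using not_less_Least by blast
  ultimately show ?thesis
    unfolding lex_less_def by (metis (no_types))
qed

lemma lex_less_add_left: "lex_less b a \<Longrightarrow> lex_less (c + b) (c + a)"
  unfolding lex_less_def plus_fun_def by auto

lemma finite_has_lex_greatest:
  assumes "finite M" "M \<noteq> {}"
  shows "\<exists>u\<in>M. \<forall>b\<in>M. b \<noteq> u \<longrightarrow> lex_less b u"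
  using assms
proof (induction M rule: finite_ne_induct)
  case (insert x M)
  then obtain u where u: "u \<in> M" "\<forall>b\<in>M. b \<noteq> u \<longrightarrow> lex_less b u"
    by blast
  show ?case
  proof (cases "lex_less u x")
    case True
    have "lex_less b x" if "b \<in> M" for b
      using u True that lex_less_trans[of b u x] by (cases "b = u") auto
    then show ?thesis
      by blast
  next
    case False
    then have "lex_less x u"
      using lex_less_linear[of x u] u(1) insert.hyps by auto
    then show ?thesis
      using u by blast
  qed
qed simp

lemma finite_lex_induct [consumes 2, case_names less]:
  assumes "finite A" "\<nu> \<in> A"
    and "\<And>\<nu>. \<nu> \<in> A \<Longrightarrow> (\<And>\<nu>'. \<nu>' \<in> A \<Longrightarrow> lex_less \<nu>' \<nu> \<Longrightarrow> P \<nu>') \<Longrightarrow> P \<nu>"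
  shows "P \<nu>"
proof -
  let ?R = "{(a, b). a \<in> A \<and> b \<in> A \<and> lex_less a b}"
  have "finite ?R"
    by (rule finite_subset[of _ "A \<times> A"]) (use assms(1) in auto)
  moreover have "trans ?R"
    unfolding trans_def using lex_less_trans by blast
  then have "acyclic ?R"
    unfolding acyclic_irrefl trancl_id[OF \<open>trans ?R\<close>] irrefl_def
    using lex_less_irrefl by blast
  ultimately have "wf ?R"
    by (rule finite_acyclic_wf)
  then show ?thesis
    using assms(2)
  proof (induction \<nu> rule: wf_induct_rule)
    case (less \<nu>)
    then show ?case
      using assms(3) by simp
  qed
qed

lemma lm_eqI:
  assumes "a \<in> psupp H" "\<And>b. b \<in> psupp H \<Longrightarrow> b \<noteq> a \<Longrightarrow> lex_less b a"
  shows "lm H = a"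
  unfolding lm_def
proof (rule the_equality)
  fix a' assume a': "a' \<in> psupp H \<and> (\<forall>b\<in>psupp H. b \<noteq> a' \<longrightarrow> lex_less b a')"
  show "a' = a"
  proof (rule ccontr)
    assume "a' \<noteq> a"
    then have "lex_less a' a" "lex_less a a'"
      using a' assms by auto
    then show False
      using lex_less_asym by blast
  qed
qed (use assms in blast)

lemma
  assumes "finite (psupp H)" "psupp H \<noteq> {}"
  shows lm_in_psupp: "lm H \<in> psupp H"
    and lex_less_lm: "b \<in> psupp H \<Longrightarrow> b \<noteq> lm H \<Longrightarrow> lex_less b (lm H)"
proof -
  obtain u where u: "u \<in> psupp H" "\<forall>b\<in>psupp H. b \<noteq> u \<longrightarrow> lex_less b u"
    using finite_has_lex_greatest[OF assms] by blast
  then have "lm H = u"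
    by (intro lm_eqI) simp_all
  with u show "lm H \<in> psupp H" "b \<in> psupp H \<Longrightarrow> b \<noteq> lm H \<Longrightarrow> lex_less b (lm H)"
    by simp_all
qed

section \<open>Linear combinations of polynomials and echelon bases\<close>

definition indep_fam :: "'i set \<Rightarrow> ('i \<Rightarrow> 'a::field mpoly) \<Rightarrow> bool" where
  "indep_fam I F \<longleftrightarrow> (\<forall>c. (\<lambda>a. \<Sum>i\<in>I. c i * F i a) = (\<lambda>_. 0) \<longrightarrow> (\<forall>i\<in>I. c i = 0))"

definition span_fam :: "'i set \<Rightarrow> ('i \<Rightarrow> 'a::field mpoly) \<Rightarrow> 'a mpoly set" where
  "span_fam I F = range (\<lambda>c a. \<Sum>i\<in>I. c i * F i a)"

lemma indep_famD: "indep_fam I F \<Longrightarrow> (\<lambda>a. \<Sum>i\<in>I. c i * F i a) = (\<lambda>_. 0) \<Longrightarrow> i \<in> I \<Longrightarrow> c i = 0"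
  unfolding indep_fam_def by blast

lemma lin_indep_fam_iff_indep_fam: "lin_indep_fam r F \<longleftrightarrow> indep_fam {..<r} F"
  unfolding lin_indep_fam_def indep_fam_def by auto

lemma indep_fam_cong: "(\<And>i. i \<in> I \<Longrightarrow> F i = G i) \<Longrightarrow> indep_fam I F \<longleftrightarrow> indep_fam I G"
  unfolding indep_fam_def by (simp cong: sum.cong)

lemma span_fam_cong: "(\<And>i. i \<in> I \<Longrightarrow> F i = G i) \<Longrightarrow> span_fam I F = span_fam I G"
  unfolding span_fam_def by (simp cong: sum.cong)

lemma span_famI: "H = (\<lambda>a. \<Sum>i\<in>I. c i * F i a) \<Longrightarrow> H \<in> span_fam I F"
  unfolding span_fam_def by (rule range_eqI)

lemma span_famE:
  assumes "H \<in> span_fam I F"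
  obtains c where "H = (\<lambda>a. \<Sum>i\<in>I. c i * F i a)"
  using assms unfolding span_fam_def by blast

lemma span_fam_add:
  assumes "H \<in> span_fam I F" "H' \<in> span_fam I F"
  shows "(\<lambda>a. H a + H' a) \<in> span_fam I F"
proof -
  obtain c c' where "H = (\<lambda>a. \<Sum>i\<in>I. c i * F i a)" "H' = (\<lambda>a. \<Sum>i\<in>I. c' i * F i a)"
    using assms by (elim span_famE)
  then show ?thesis
    by (intro span_famI[where c = "\<lambda>i. c i + c' i"]) (simp add: sum.distrib distrib_right)
qed

lemma span_fam_scale:
  assumes "H \<in> span_fam I F"
  shows "(\<lambda>a. t * H a) \<in> span_fam I F"
proof -
  obtain c where "H = (\<lambda>a. \<Sum>i\<in>I. c i * F i a)"
    using assms by (elim span_famE)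
  then show ?thesis
    by (intro span_famI[where c = "\<lambda>i. t * c i"]) (simp add: sum_distrib_left mult.assoc)
qed

lemma span_fam_base: "finite I \<Longrightarrow> i \<in> I \<Longrightarrow> F i \<in> span_fam I F"
  by (intro span_famI[where c = "\<lambda>j. of_bool (j = i)"]) simp

lemma span_fam_sum:
  assumes "finite J" "\<And>j. j \<in> J \<Longrightarrow> H j \<in> span_fam I F"
  shows "(\<lambda>a. \<Sum>j\<in>J. t j * H j a) \<in> span_fam I F"
  using assms
proof (induction J rule: finite_induct)
  case empty
  show ?case
    by (intro span_famI[where c = "\<lambda>_. 0"]) simp
next
  case (insert j J)
  then show ?case
    by (simp add: span_fam_add span_fam_scale)
qed

lemma span_fam_subset:
  assumes "finite J" "\<And>j. j \<in> J \<Longrightarrow> H j \<in> span_fam I F"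
  shows "span_fam J H \<subseteq> span_fam I F"
proof
  fix X assume "X \<in> span_fam J H"
  then obtain t where "X = (\<lambda>a. \<Sum>j\<in>J. t j * H j a)"
    by (elim span_famE)
  then show "X \<in> span_fam I F"
    using span_fam_sum[OF assms] by simp
qed

lemma span_fam_mono: "J \<subseteq> I \<Longrightarrow> finite I \<Longrightarrow> span_fam J F \<subseteq> span_fam I F"
  using finite_subset by (intro span_fam_subset) (auto intro: span_fam_base)

lemma psupp_span_fam:
  assumes "\<And>i. i \<in> I \<Longrightarrow> psupp (F i) \<subseteq> M" "H \<in> span_fam I F"
  shows "psupp H \<subseteq> M"
proof
  fix a assume "a \<in> psupp H"
  obtain c where "H = (\<lambda>a. \<Sum>i\<in>I. c i * F i a)"
    using assms(2) by (elim span_famE)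
  with \<open>a \<in> psupp H\<close> have "(\<Sum>i\<in>I. c i * F i a) \<noteq> 0"
    unfolding psupp_def by simp
  then obtain i where "i \<in> I" "c i * F i a \<noteq> 0"
    by (rule sum.not_neutral_contains_not_neutral)
  then show "a \<in> M"
    using assms(1) unfolding psupp_def by auto
qed

lemma indep_fam_psupp_nonempty:
  fixes F :: "'i \<Rightarrow> 'a::field mpoly"
  assumes "indep_fam I F" "finite I" "i \<in> I"
  shows "psupp (F i) \<noteq> {}"
proof
  assume "psupp (F i) = {}"
  then have "(\<lambda>a. \<Sum>j\<in>I. of_bool (j = i) * F j a) = (\<lambda>_. 0)"
    using assms(2,3) unfolding psupp_def by auto
  from indep_famD[OF assms(1) this assms(3)] show False
    by simp
qed

lemma psupp_eliminate_subset:
  fixes f g :: "'a::field mpoly"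
  assumes "psupp f \<subseteq> M" "psupp g \<subseteq> M" "g u \<noteq> 0"
  shows "psupp (\<lambda>a. f a - f u / g u * g a) \<subseteq> M - {u}"
proof
  fix a assume "a \<in> psupp (\<lambda>a. f a - f u / g u * g a)"
  then have "f a \<noteq> 0 \<or> g a \<noteq> 0" "a \<noteq> u"
    using assms(3) unfolding psupp_def by auto
  then show "a \<in> M - {u}"
    using assms(1,2) unfolding psupp_def by blast
qed

lemma indep_fam_eliminate:
  fixes F :: "'i \<Rightarrow> 'a::field mpoly"
  assumes "indep_fam I F" "finite I" "k \<in> I" "F k u \<noteq> 0"
  shows "indep_fam (I - {k}) (\<lambda>i a. F i a - F i u / F k u * F k a)"
  unfolding indep_fam_def
proof (intro allI impI)
  fix c assume c: "(\<lambda>a. \<Sum>i\<in>I - {k}. c i * (F i a - F i u / F k u * F k a)) = (\<lambda>_. 0)"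
  \<comment> \<open>The coefficient of \<open>F k\<close> collects the multiples of \<open>F k\<close> hidden in the eliminated family.\<close>
  define c' where "c' i = (if i = k then - (\<Sum>j\<in>I - {k}. c j * F j u) / F k u else c i)" for i
  have "(\<lambda>a. \<Sum>i\<in>I. c' i * F i a) = (\<lambda>a. \<Sum>i\<in>I - {k}. c i * (F i a - F i u / F k u * F k a))"
  proof
    fix a
    have "(\<Sum>i\<in>I. c' i * F i a) = c' k * F k a + (\<Sum>i\<in>I - {k}. c i * F i a)"
      using assms(2,3) by (simp add: sum.remove c'_def)
    also have "\<dots> = (\<Sum>i\<in>I - {k}. c i * (F i a - F i u / F k u * F k a))"
      by (simp add: c'_def algebra_simps sum_subtractf sum_distrib_left sum_divide_distrib)
    finally show "(\<Sum>i\<in>I. c' i * F i a) = (\<Sum>i\<in>I - {k}. c i * (F i a - F i u / F k u * F k a))" .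
  qed
  then have "c' i = 0" if "i \<in> I" for i
    using indep_famD[OF assms(1) _ that] c by simp
  then show "\<forall>i\<in>I - {k}. c i = 0"
    unfolding c'_def by (metis DiffE singletonI)
qed

lemma indep_fam_pivot:
  fixes G :: "'i \<Rightarrow> 'a::field mpoly"
  assumes "indep_fam (I - {k}) G" "finite I" "k \<in> I" "G k u \<noteq> 0"
    and "\<And>i. i \<in> I - {k} \<Longrightarrow> G i u = 0"
  shows "indep_fam I G"
  unfolding indep_fam_def
proof (intro allI impI)
  fix c assume c: "(\<lambda>a. \<Sum>i\<in>I. c i * G i a) = (\<lambda>_. 0)"
  have split: "(\<Sum>i\<in>I. c i * G i a) = c k * G k a + (\<Sum>i\<in>I - {k}. c i * G i a)" for a
    using assms(2,3) by (simp add: sum.remove)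
  have "c k * G k u = 0"
    using split[of u] fun_cong[OF c, of u] assms(5) by simp
  then have "c k = 0"
    using assms(4) by simp
  moreover have "(\<lambda>a. \<Sum>i\<in>I - {k}. c i * G i a) = (\<lambda>_. 0)"
    using split c \<open>c k = 0\<close> by (simp add: fun_eq_iff)
  then have "\<forall>i\<in>I - {k}. c i = 0"
    using assms(1) unfolding indep_fam_def by blast
  ultimately show "\<forall>i\<in>I. c i = 0"
    by blast
qed

lemma span_fam_pivot:
  fixes F G :: "'i \<Rightarrow> 'a::field mpoly"
  assumes "finite I" "k \<in> I"
    and "span_fam (I - {k}) G = span_fam (I - {k}) (\<lambda>i a. F i a - t i * F k a)"
  shows "span_fam I (G(k := F k)) = span_fam I F"
proof
  have "(\<lambda>a. F i a + (- t i) * F k a) \<in> span_fam I F" if "i \<in> I" for i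
    using assms(1,2) that by (intro span_fam_add span_fam_scale span_fam_base)
  then have "span_fam (I - {k}) (\<lambda>i a. F i a - t i * F k a) \<subseteq> span_fam I F"
    using assms(1) by (intro span_fam_subset) auto
  then have "G i \<in> span_fam I F" if "i \<in> I - {k}" for i
    using assms(1,3) that span_fam_base[of "I - {k}" i G] by auto
  then show "span_fam I (G(k := F k)) \<subseteq> span_fam I F"
    using assms(1,2) by (intro span_fam_subset) (auto intro: span_fam_base)
next
  have Fk: "F k \<in> span_fam I (G(k := F k))"
    using span_fam_base[OF assms(1,2), of "G(k := F k)"] by simp
  have "span_fam (I - {k}) (\<lambda>i a. F i a - t i * F k a) \<subseteq> span_fam I (G(k := F k))"
    using assms(3) span_fam_cong[of "I - {k}" G "G(k := F k)"]
      span_fam_mono[of "I - {k}" I "G(k := F k)", OF _ assms(1)]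
    by auto
  then have "(\<lambda>a. (F i a - t i * F k a) + t i * F k a) \<in> span_fam I (G(k := F k))" if "i \<in> I - {k}" for i
    using that Fk assms(1) by (intro span_fam_add span_fam_scale) (auto intro: span_fam_base)
  then have "F i \<in> span_fam I (G(k := F k))" if "i \<in> I" for i
    using that Fk by (cases "i = k") auto
  then show "span_fam I F \<subseteq> span_fam I (G(k := F k))"
    using assms(1) by (intro span_fam_subset)
qed

definition echelon_basis ::
    "'i set \<Rightarrow> (nat \<Rightarrow> nat) set \<Rightarrow> ('i \<Rightarrow> 'a::field mpoly) \<Rightarrow> ('i \<Rightarrow> 'a mpoly) \<Rightarrow> bool" where
  "echelon_basis I M F G \<longleftrightarrow>
     indep_fam I G \<and> (\<forall>i\<in>I. psupp (G i) \<subseteq> M) \<and> span_fam I G = span_fam I F \<and>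
     inj_on (\<lambda>i. lm (G i)) I \<and> (\<forall>i\<in>I. lm (G i) \<in> psupp (G i))"

lemma echelon_basis_add_pivot:
  fixes F G :: "'i \<Rightarrow> 'a::field mpoly"
  assumes "finite I" "k \<in> I" "F k u \<noteq> 0" "psupp (F k) \<subseteq> M"
    and u_greatest: "\<And>b. b \<in> M \<Longrightarrow> b \<noteq> u \<Longrightarrow> lex_less b u"
    and G: "echelon_basis (I - {k}) (M - {u}) (\<lambda>i a. F i a - F i u / F k u * F k a) G"
  shows "echelon_basis I M F (G(k := F k))"
proof -
  let ?G = "G(k := F k)"
  have G_indep: "indep_fam (I - {k}) G"
    and G_supp: "\<And>i. i \<in> I - {k} \<Longrightarrow> psupp (G i) \<subseteq> M - {u}"
    and G_span: "span_fam (I - {k}) G = span_fam (I - {k}) (\<lambda>i a. F i a - F i u / F k u * F k a)"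
    and G_inj: "inj_on (\<lambda>i. lm (G i)) (I - {k})"
    and G_lm: "\<And>i. i \<in> I - {k} \<Longrightarrow> lm (G i) \<in> psupp (G i)"
    using G unfolding echelon_basis_def by blast+
  have "indep_fam (I - {k}) ?G"
    using G_indep by (subst indep_fam_cong[of _ _ G]) auto
  moreover have "?G k u \<noteq> 0"
    using assms(3) by simp
  moreover have "?G i u = 0" if "i \<in> I - {k}" for i
    using G_supp[OF that] that unfolding psupp_def by auto
  ultimately have indep: "indep_fam I ?G"
    using indep_fam_pivot assms(1,2) by metis
  have lm_k: "lm (F k) = u"
    using assms(3,4) u_greatest by (intro lm_eqI) (auto simp: psupp_def)
  have "lm (G i) \<noteq> u" if "i \<in> I - {k}" for i
    using G_lm[OF that] G_supp[OF that] by blast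
  then have "lm (?G k) \<notin> (\<lambda>i. lm (?G i)) ` (I - {k})"
    using lm_k by (simp add: image_iff) blast
  moreover have "inj_on (\<lambda>i. lm (?G i)) (I - {k})"
    using G_inj unfolding inj_on_def by simp
  ultimately have "inj_on (\<lambda>i. lm (?G i)) (insert k (I - {k}))"
    by (simp only: inj_on_insert Diff_idemp simp_thms)
  then have inj: "inj_on (\<lambda>i. lm (?G i)) I"
    using assms(2) by (simp add: insert_absorb)
  have "\<forall>i\<in>I. psupp (?G i) \<subseteq> M"
    using G_supp assms(4) by auto
  moreover have "span_fam I ?G = span_fam I F"
    by (rule span_fam_pivot[OF assms(1,2) G_span])
  moreover have "\<forall>i\<in>I. lm (?G i) \<in> psupp (?G i)"
    using lm_k G_lm assms(3) unfolding psupp_def by auto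
  ultimately show ?thesis
    using indep inj unfolding echelon_basis_def by blast
qed

lemma echelon_basis_exists:
  fixes F :: "'i \<Rightarrow> 'a::field mpoly"
  assumes "finite M" "finite I" "indep_fam I F" "\<forall>i\<in>I. psupp (F i) \<subseteq> M"
  shows "\<exists>G. echelon_basis I M F G"
  using assms
proof (induction "card M" arbitrary: M I F rule: less_induct)
  case less
  note M_fin = less.prems(1) and I_fin = less.prems(2) and F_indep = less.prems(3)
    and F_supp = less.prems(4)
  show ?case
  proof (cases "I = {}")
    case True
    then have "echelon_basis I M F F"
      unfolding echelon_basis_def indep_fam_def by simp
    then show ?thesis
      by blast
  next
    case False
    then obtain i where "i \<in> I"
      by blast
    then have "psupp (F i) \<noteq> {}" "psupp (F i) \<subseteq> M"
      using indep_fam_psupp_nonempty[OF F_indep I_fin] F_supp by auto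
    then obtain u where u: "u \<in> M" "\<And>b. b \<in> M \<Longrightarrow> b \<noteq> u \<Longrightarrow> lex_less b u"
      using finite_has_lex_greatest[OF M_fin] by blast
    have IH: "\<exists>G. echelon_basis J (M - {u}) F' G"
      if "finite J" "indep_fam J F'" "\<forall>i\<in>J. psupp (F' i) \<subseteq> M - {u}"
      for J and F' :: "'i \<Rightarrow> 'a mpoly"
      using less.hyps[OF card_Diff1_less[OF M_fin u(1)] _ that] M_fin by blast
    show ?thesis
    proof (cases "\<exists>k\<in>I. F k u \<noteq> 0")
      case True
      then obtain k where k: "k \<in> I" "F k u \<noteq> 0"
        by blast
      define F' where "F' = (\<lambda>i a. F i a - F i u / F k u * F k a)"
      have "psupp (F' i) \<subseteq> M - {u}" if "i \<in> I - {k}" for i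
        unfolding F'_def using F_supp that k by (intro psupp_eliminate_subset) auto
      moreover have "indep_fam (I - {k}) F'"
        using indep_fam_eliminate[OF F_indep I_fin k] by (simp only: F'_def)
      ultimately obtain G where "echelon_basis (I - {k}) (M - {u}) F' G"
        using IH[of "I - {k}" F'] I_fin by blast
      then have "echelon_basis I M F (G(k := F k))"
        unfolding F'_def using I_fin k F_supp u(2) by (intro echelon_basis_add_pivot) simp_all
      then show ?thesis
        by blast
    next
      case False
      then have "\<forall>i\<in>I. psupp (F i) \<subseteq> M - {u}"
        using F_supp unfolding psupp_def by auto
      then obtain G where "echelon_basis I (M - {u}) F G"
        using IH[OF I_fin F_indep] by blast
      then have "echelon_basis I M F G"
        unfolding echelon_basis_def by blast
      then show ?thesis
        by blast
    qed
  qed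
qed

lemma indep_fam_card_le:
  fixes F :: "'i \<Rightarrow> 'a::field mpoly"
  assumes "finite M" "finite I" "indep_fam I F" "\<forall>i\<in>I. psupp (F i) \<subseteq> M"
  shows "card I \<le> card M"
proof -
  obtain G where G: "echelon_basis I M F G"
    using echelon_basis_exists[OF assms] by blast
  then have "card I = card ((\<lambda>i. lm (G i)) ` I)"
    unfolding echelon_basis_def by (simp add: card_image)
  also have "\<dots> \<le> card M"
    using G assms(1) unfolding echelon_basis_def by (intro card_mono) auto
  finally show ?thesis .
qed

section \<open>Zero sets and distinct leading monomials\<close>

definition mons_deg :: "nat \<Rightarrow> nat \<Rightarrow> (nat \<Rightarrow> nat) set" where
  "mons_deg m e = {a \<in> mons m. mdeg m a = e}"

lemma finite_mons_deg: "finite (mons_deg m e)"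
proof -
  have "mons_deg m e \<subseteq> {a. \<forall>i. (i \<in> {..m} \<longrightarrow> a i \<in> {..e}) \<and> (i \<notin> {..m} \<longrightarrow> a i = 0)}"
  proof (intro subsetI CollectI allI conjI impI)
    fix a i assume a: "a \<in> mons_deg m e"
    show "a i \<in> {..e}" if "i \<in> {..m}"
      using a member_le_sum[of i "{..m}" a] that unfolding mons_deg_def mdeg_def by auto
    show "a i = 0" if "i \<notin> {..m}"
      using a that unfolding mons_deg_def mons_def by auto
  qed
  moreover have "finite {a. \<forall>i. (i \<in> {..m} \<longrightarrow> a i \<in> {..e}) \<and> (i \<notin> {..m} \<longrightarrow> a i = (0::nat))}"
    by (rule finite_set_of_finite_funs) auto
  ultimately show ?thesis
    by (rule finite_subset)
qed

lemma Mbar_subset_mons_deg: "Mbar q m e \<subseteq> mons_deg m e"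
  unfolding Mbar_def proj_reduced_mon_def mons_deg_def by auto

lemma finite_Mbar: "finite (Mbar q m e)"
  using finite_subset[OF Mbar_subset_mons_deg finite_mons_deg] .

definition mon_eval :: "nat \<Rightarrow> (nat \<Rightarrow> nat) \<Rightarrow> (nat \<Rightarrow> 'a::comm_ring_1) \<Rightarrow> 'a" where
  "mon_eval m a x = (\<Prod>i\<le>m. x i ^ a i)"

lemma peval_eq_sum:
  assumes "finite M" "psupp H \<subseteq> M"
  shows "peval m H x = (\<Sum>a\<in>M. H a * mon_eval m a x)"
  unfolding peval_def mon_eval_def
  by (rule sum.mono_neutral_left[OF assms]) (simp add: psupp_def)

lemma peval_span_fam_eq_0:
  fixes F :: "'i \<Rightarrow> 'a::field mpoly"
  assumes "finite M" "finite I" "\<forall>i\<in>I. psupp (F i) \<subseteq> M" "H \<in> span_fam I F"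
    and "\<forall>i\<in>I. peval m (F i) x = 0"
  shows "peval m H x = 0"
proof -
  obtain c where H: "H = (\<lambda>a. \<Sum>i\<in>I. c i * F i a)"
    using assms(4) by (elim span_famE)
  have "psupp H \<subseteq> M"
    using assms(3) by (intro psupp_span_fam[OF _ assms(4)]) simp
  then have "peval m H x = (\<Sum>a\<in>M. (\<Sum>i\<in>I. c i * F i a) * mon_eval m a x)"
    by (simp add: peval_eq_sum[OF assms(1)] H)
  also have "\<dots> = (\<Sum>a\<in>M. \<Sum>i\<in>I. c i * (F i a * mon_eval m a x))"
    by (simp add: sum_distrib_right mult.assoc)
  also have "\<dots> = (\<Sum>i\<in>I. \<Sum>a\<in>M. c i * (F i a * mon_eval m a x))"
    by (rule sum.swap)
  also have "\<dots> = (\<Sum>i\<in>I. c i * peval m (F i) x)"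
    using assms(1,3) by (intro sum.cong) (simp_all add: peval_eq_sum sum_distrib_left)
  finally show ?thesis
    using assms(5) by simp
qed

lemma zero_set_mono:
  fixes F G :: "nat \<Rightarrow> 'a::field mpoly"
  assumes "finite M" "\<forall>i<r. psupp (F i) \<subseteq> M" "\<forall>i<r. G i \<in> span_fam {..<r} F"
  shows "zero_set m r F \<subseteq> zero_set m r G"
proof
  fix P assume "P \<in> zero_set m r F"
  then have P: "P \<in> proj_space TYPE('a) m" "\<forall>x\<in>P. \<forall>i<r. peval m (F i) x = 0"
    unfolding zero_set_def by auto
  have "peval m (G i) x = 0" if "x \<in> P" "i < r" for x i
    using P(2) that assms(2,3) by (intro peval_span_fam_eq_0[OF assms(1) finite_lessThan[of r], where F = F]) auto
  with P(1) show "P \<in> zero_set m r G"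
    unfolding zero_set_def by auto
qed

lemma echelon_family:
  fixes F :: "nat \<Rightarrow> 'a::field mpoly"
  assumes "lin_indep_fam r F" "\<forall>i<r. pr_hom q m d (F i)"
  obtains G where "lin_indep_fam r G" "\<forall>i<r. pr_hom q m d (G i)"
    "inj_on (\<lambda>i. lm (G i)) {..<r}" "zero_set m r G = zero_set m r F"
proof -
  have F_supp: "\<forall>i\<in>{..<r}. psupp (F i) \<subseteq> Mbar q m d"
    using assms(2) unfolding pr_hom_def by simp
  obtain G where "echelon_basis {..<r} (Mbar q m d) F G"
    using echelon_basis_exists[OF finite_Mbar finite_lessThan _ F_supp] assms(1)
    unfolding lin_indep_fam_iff_indep_fam by blast
  then have G: "indep_fam {..<r} G" "\<forall>i<r. psupp (G i) \<subseteq> Mbar q m d"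
    "span_fam {..<r} G = span_fam {..<r} F" "inj_on (\<lambda>i. lm (G i)) {..<r}"
    unfolding echelon_basis_def by auto
  have "zero_set m r F \<subseteq> zero_set m r G"
    using G(3) F_supp span_fam_base[of "{..<r}" _ G]
    by (intro zero_set_mono[OF finite_Mbar]) auto
  moreover have "zero_set m r G \<subseteq> zero_set m r F"
    using G(2,3) span_fam_base[of "{..<r}" _ F]
    by (intro zero_set_mono[OF finite_Mbar]) auto
  ultimately show thesis
    using G that unfolding lin_indep_fam_iff_indep_fam pr_hom_def by blast
qed

theorem ebar_eq_Max_distinct_lm:
  "ebar TYPE('a::{finite,field}) r d m =
     Max {card (zero_set m r F) | F :: nat \<Rightarrow> 'a mpoly.
            lin_indep_fam r F \<and> (\<forall>i<r. pr_hom CARD('a) m d (F i)) \<and> inj_on (\<lambda>i. lm (F i)) {..<r}}"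
    (is "_ = Max ?R")
proof -
  let ?L = "{card (zero_set m r F) | F :: nat \<Rightarrow> 'a mpoly.
              lin_indep_fam r F \<and> (\<forall>i<r. pr_hom CARD('a) m d (F i))}"
  have "?L \<subseteq> ?R"
  proof
    fix n assume "n \<in> ?L"
    then obtain F :: "nat \<Rightarrow> 'a mpoly" where F: "n = card (zero_set m r F)"
      "lin_indep_fam r F" "\<forall>i<r. pr_hom CARD('a) m d (F i)"
      by blast
    obtain G where "lin_indep_fam r G" "\<forall>i<r. pr_hom CARD('a) m d (G i)"
      "inj_on (\<lambda>i. lm (G i)) {..<r}" "zero_set m r G = zero_set m r F"
      using echelon_family[OF F(2,3)] .
    with F(1) show "n \<in> ?R"
      by (intro CollectI exI[of _ G]) simp
  qed
  moreover have "?R \<subseteq> ?L"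
    by blast
  ultimately have "?L = ?R"
    by (rule subset_antisym)
  then show ?thesis
    unfolding ebar_def by (rule arg_cong)
qed

section \<open>Finite fields and projective points\<close>

lemma card_field_ge_2: "2 \<le> CARD('a::{finite,field})"
proof -
  have "card {0::'a, 1} \<le> CARD('a)"
    by (rule card_mono) simp_all
  then show ?thesis
    by simp
qed

lemma power_card_eq_self: "(x::'a::{finite,field}) ^ CARD('a) = x"
proof (cases "x = 0")
  case True
  then show ?thesis
    using card_field_ge_2[where 'a = 'a] by simp
next
  case False
  let ?U = "UNIV - {0::'a}"
  have "x ^ card ?U * \<Prod>?U = (\<Prod>y\<in>?U. x * y)"
    by (simp add: prod.distrib)
  also have "\<dots> = \<Prod>?U"
    by (rule prod.reindex_bij_witness[of _ "\<lambda>y. y / x" "\<lambda>y. x * y"]) (use False in auto)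
  finally have "x ^ (CARD('a) - 1) = 1"
    by (simp add: card_Diff_subset)
  moreover obtain n where "CARD('a) = Suc n"
    using card_field_ge_2[where 'a = 'a] by (metis Suc_le_D numeral_2_eq_2)
  ultimately show ?thesis
    by simp
qed

definition pclass :: "(nat \<Rightarrow> 'a::field) \<Rightarrow> (nat \<Rightarrow> 'a) set" where
  "pclass x = {\<lambda>i. c * x i | c. c \<noteq> 0}"

lemma pclass_self: "x \<in> pclass x"
  unfolding pclass_def by (intro CollectI exI[of _ 1]) simp

lemma pclass_scale_subset:
  assumes "c \<noteq> 0"
  shows "pclass (\<lambda>i. c * x i) \<subseteq> pclass x"
proof
  fix z assume "z \<in> pclass (\<lambda>i. c * x i)"
  then obtain d where "d \<noteq> 0" "z = (\<lambda>i. d * (c * x i))"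
    unfolding pclass_def by blast
  then have "d * c \<noteq> 0" "z = (\<lambda>i. (d * c) * x i)"
    using assms by (simp_all add: mult.assoc)
  then show "z \<in> pclass x"
    unfolding pclass_def by blast
qed

lemma pclass_eqI:
  assumes "c \<noteq> 0" "y = (\<lambda>i. c * x i)"
  shows "pclass y = pclass x"
proof
  show "pclass y \<subseteq> pclass x"
    using assms pclass_scale_subset by blast
  have "x = (\<lambda>i. (1 / c) * y i)"
    using assms by simp
  then show "pclass x \<subseteq> pclass y"
    using assms(1) pclass_scale_subset[of "1 / c" y] by simp
qed

lemma proj_space_eq:
  "proj_space TYPE('a::field) m = pclass ` {x :: nat \<Rightarrow> 'a. (\<forall>i>m. x i = 0) \<and> x \<noteq> (\<lambda>_. 0)}"
  unfolding proj_space_def quotient_def pclass_def by auto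

lemma finite_proj_space: "finite (proj_space TYPE('a::{finite,field}) m)"
proof -
  have "finite {x :: nat \<Rightarrow> 'a. \<forall>i. (i \<in> {..m} \<longrightarrow> x i \<in> UNIV) \<and> (i \<notin> {..m} \<longrightarrow> x i = 0)}"
    by (rule finite_set_of_finite_funs) simp_all
  then have "finite {x :: nat \<Rightarrow> 'a. (\<forall>i>m. x i = 0) \<and> x \<noteq> (\<lambda>_. 0)}"
    by (rule finite_subset[rotated]) auto
  then show ?thesis
    unfolding proj_space_eq by simp
qed

lemma obtain_proj_representatives:
  assumes "V \<subseteq> proj_space TYPE('a::field) m"
  obtains X where "bij_betw pclass X V" "\<And>x. x \<in> X \<Longrightarrow> (\<forall>i>m. x i = 0) \<and> x \<noteq> (\<lambda>_. 0)"
proof -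
  let ?A = "{x :: nat \<Rightarrow> 'a. (\<forall>i>m. x i = 0) \<and> x \<noteq> (\<lambda>_. 0)}"
  let ?rep = "inv_into ?A pclass"
  have V: "V \<subseteq> pclass ` ?A"
    using assms unfolding proj_space_eq .
  then have "bij_betw pclass (?rep ` V) V"
    by (intro bij_betw_byWitness[where f' = ?rep]) (auto simp: f_inv_into_f)
  moreover have "?rep ` V \<subseteq> ?A"
  proof (rule image_subsetI)
    fix P assume "P \<in> V"
    then show "?rep P \<in> ?A"
      using V by (intro inv_into_into) blast
  qed
  ultimately show thesis
    using that by blast
qed

lemma not_proportional_if_pclass_ne:
  fixes x y :: "nat \<Rightarrow> 'a::field"
  assumes "pclass y \<noteq> pclass x" "\<forall>i>m. x i = 0" "\<forall>i>m. y i = 0" "x \<noteq> (\<lambda>_. 0)" "y \<noteq> (\<lambda>_. 0)"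
  shows "\<exists>j\<le>m. \<exists>k\<le>m. y k * x j \<noteq> y j * x k"
proof (rule ccontr)
  assume "\<not> ?thesis"
  then have cross: "y k * x j = y j * x k" if "j \<le> m" "k \<le> m" for j k
    using that by blast
  obtain j where j: "x j \<noteq> 0"
    using assms(4) by auto
  then have "j \<le> m"
    using assms(2) not_le by blast
  define c where "c = y j / x j"
  have y: "y = (\<lambda>i. c * x i)"
  proof
    fix i show "y i = c * x i"
      using cross[OF _ \<open>j \<le> m\<close>, of i] assms(2,3) j unfolding c_def
      by (cases "i \<le> m") (auto simp: field_simps)
  qed
  moreover from y have "c \<noteq> 0"
    using assms(5) by auto
  ultimately show False
    using assms(1) pclass_eqI by blast
qed

section \<open>Functions spanned by monomials on a set of points\<close>

definition var_exp :: "nat \<Rightarrow> nat \<Rightarrow> nat \<Rightarrow> nat" where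
  "var_exp j n = (\<lambda>i. if i = j then n else 0)"

lemma var_exp_mons: "j \<le> m \<Longrightarrow> var_exp j n \<in> mons m"
  unfolding var_exp_def mons_def by auto

lemma mdeg_var_exp: "j \<le> m \<Longrightarrow> mdeg m (var_exp j n) = n"
  unfolding var_exp_def mdeg_def by simp

lemma mon_eval_var_exp: "j \<le> m \<Longrightarrow> mon_eval m (var_exp j n) x = x j ^ n"
  unfolding mon_eval_def var_exp_def by (simp add: if_distrib cong: if_cong)

lemma mdeg_add: "mdeg m (a + b) = mdeg m a + mdeg m b"
  unfolding mdeg_def by (simp add: sum.distrib)

lemma mons_add: "a \<in> mons m \<Longrightarrow> b \<in> mons m \<Longrightarrow> a + b \<in> mons m"
  unfolding mons_def by simp

lemma mons_deg_add: "a \<in> mons_deg m e \<Longrightarrow> b \<in> mons_deg m e' \<Longrightarrow> a + b \<in> mons_deg m (e + e')"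
  unfolding mons_deg_def by (simp add: mons_add mdeg_add)

lemma mon_eval_add: "mon_eval m (a + b) x = mon_eval m a x * mon_eval m b x"
  unfolding mon_eval_def by (simp add: power_add prod.distrib)

lemma mons_deg_0: "mons_deg m 0 = {0}"
  unfolding mons_deg_def mons_def mdeg_def by (auto simp: fun_eq_iff) (metis atMost_iff leI)

definition in_mon_span ::
    "nat \<Rightarrow> (nat \<Rightarrow> 'a::field) set \<Rightarrow> (nat \<Rightarrow> nat) set \<Rightarrow> ((nat \<Rightarrow> 'a) \<Rightarrow> 'a) \<Rightarrow> bool" where
  "in_mon_span m X D f \<longleftrightarrow> (\<exists>c. \<forall>x\<in>X. f x = (\<Sum>\<mu>\<in>D. c \<mu> * mon_eval m \<mu> x))"

lemma in_mon_span_cong: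
  "in_mon_span m X D f \<Longrightarrow> (\<And>x. x \<in> X \<Longrightarrow> f x = g x) \<Longrightarrow> in_mon_span m X D g"
  unfolding in_mon_span_def by simp

lemma in_mon_span_add:
  assumes "in_mon_span m X D f" "in_mon_span m X D g"
  shows "in_mon_span m X D (\<lambda>x. f x + g x)"
proof -
  obtain c c' where "\<forall>x\<in>X. f x = (\<Sum>\<mu>\<in>D. c \<mu> * mon_eval m \<mu> x)"
    "\<forall>x\<in>X. g x = (\<Sum>\<mu>\<in>D. c' \<mu> * mon_eval m \<mu> x)"
    using assms unfolding in_mon_span_def by blast
  then show ?thesis
    unfolding in_mon_span_def
    by (intro exI[of _ "\<lambda>\<mu>. c \<mu> + c' \<mu>"]) (simp add: sum.distrib distrib_right)
qed

lemma in_mon_span_scale: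
  assumes "in_mon_span m X D f"
  shows "in_mon_span m X D (\<lambda>x. t * f x)"
proof -
  obtain c where "\<forall>x\<in>X. f x = (\<Sum>\<mu>\<in>D. c \<mu> * mon_eval m \<mu> x)"
    using assms unfolding in_mon_span_def by blast
  then show ?thesis
    unfolding in_mon_span_def
    by (intro exI[of _ "\<lambda>\<mu>. t * c \<mu>"]) (simp add: sum_distrib_left mult.assoc)
qed

lemma in_mon_span_sum:
  assumes "finite N" "\<And>\<nu>. \<nu> \<in> N \<Longrightarrow> in_mon_span m X D (g \<nu>)"
  shows "in_mon_span m X D (\<lambda>x. \<Sum>\<nu>\<in>N. t \<nu> * g \<nu> x)"
  using assms
proof (induction N rule: finite_induct)
  case empty
  show ?case
    unfolding in_mon_span_def by (intro exI[of _ "\<lambda>_. 0"]) simp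
next
  case (insert \<nu> N)
  then show ?case
    by (simp add: in_mon_span_add in_mon_span_scale)
qed

lemma in_mon_span_mon: "finite D \<Longrightarrow> \<mu> \<in> D \<Longrightarrow> in_mon_span m X D (mon_eval m \<mu>)"
  unfolding in_mon_span_def by (intro exI[of _ "\<lambda>\<nu>. of_bool (\<nu> = \<mu>)"]) simp

lemma in_mon_span_trans:
  assumes "finite D" "in_mon_span m X D f" "\<And>\<mu>. \<mu> \<in> D \<Longrightarrow> in_mon_span m X D' (mon_eval m \<mu>)"
  shows "in_mon_span m X D' f"
proof -
  obtain c where "\<forall>x\<in>X. f x = (\<Sum>\<mu>\<in>D. c \<mu> * mon_eval m \<mu> x)"
    using assms(2) unfolding in_mon_span_def by blast
  moreover have "in_mon_span m X D' (\<lambda>x. \<Sum>\<mu>\<in>D. c \<mu> * mon_eval m \<mu> x)"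
    using assms(1,3) by (rule in_mon_span_sum)
  ultimately show ?thesis
    using in_mon_span_cong by fastforce
qed

lemma in_mon_span_mono:
  assumes "finite D'" "D \<subseteq> D'" "in_mon_span m X D f"
  shows "in_mon_span m X D' f"
proof (rule in_mon_span_trans[OF _ assms(3)])
  show "finite D"
    using assms(1,2) by (rule finite_subset[rotated])
  show "in_mon_span m X D' (mon_eval m \<mu>)" if "\<mu> \<in> D" for \<mu>
    using assms(1) assms(2) that by (intro in_mon_span_mon) auto
qed

lemma in_mon_span_shift:
  assumes "in_mon_span m X D f"
  shows "in_mon_span m X ((\<lambda>\<nu>. \<nu> + a) ` D) (\<lambda>x. mon_eval m a x * f x)"
proof -
  obtain c where c: "\<forall>x\<in>X. f x = (\<Sum>\<nu>\<in>D. c \<nu> * mon_eval m \<nu> x)"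
    using assms unfolding in_mon_span_def by blast
  have inj: "inj_on (\<lambda>\<nu>. \<nu> + a) D"
    by (rule inj_onI) (metis add_right_cancel)
  have "mon_eval m a x * f x = (\<Sum>\<mu>\<in>(\<lambda>\<nu>. \<nu> + a) ` D. c (\<mu> - a) * mon_eval m \<mu> x)"
    if "x \<in> X" for x
  proof -
    have "mon_eval m a x * f x = (\<Sum>\<nu>\<in>D. c \<nu> * mon_eval m (\<nu> + a) x)"
      using c that by (simp add: sum_distrib_left mon_eval_add mult_ac)
    also have "\<dots> = (\<Sum>\<mu>\<in>(\<lambda>\<nu>. \<nu> + a) ` D. c (\<mu> - a) * mon_eval m \<mu> x)"
      by (simp only: sum.reindex[OF inj] comp_def add_diff_cancel_right')
    finally show ?thesis .
  qed
  then show ?thesis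
    unfolding in_mon_span_def by (intro exI[of _ "\<lambda>\<mu>. c (\<mu> - a)"]) blast
qed

lemma in_mon_span_const: "in_mon_span m X (mons_deg m 0) (\<lambda>_. t)"
  unfolding in_mon_span_def mons_deg_0 mon_eval_def by (intro exI[of _ "\<lambda>_. t"]) simp

lemma in_mon_span_mult_var:
  assumes "in_mon_span m X (mons_deg m e) f" "j \<le> m"
  shows "in_mon_span m X (mons_deg m (Suc e)) (\<lambda>x. x j * f x)"
proof -
  have "(\<lambda>\<nu>. \<nu> + var_exp j 1) ` mons_deg m e \<subseteq> mons_deg m (Suc e)"
    using mons_deg_add[of _ m e "var_exp j 1" 1] assms(2)
    by (auto simp: mons_deg_def var_exp_mons mdeg_var_exp)
  moreover have "in_mon_span m X ((\<lambda>\<nu>. \<nu> + var_exp j 1) ` mons_deg m e) (\<lambda>x. x j * f x)"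
    using in_mon_span_shift[OF assms(1), of "var_exp j 1"] by (simp add: mon_eval_var_exp assms(2))
  ultimately show ?thesis
    by (rule in_mon_span_mono[OF finite_mons_deg])
qed

lemma in_mon_span_linear_factor:
  assumes "in_mon_span m X (mons_deg m e) f" "j \<le> m" "k \<le> m"
  shows "in_mon_span m X (mons_deg m (Suc e)) (\<lambda>x. (a * x j - b * x k) * f x)"
proof -
  have "in_mon_span m X (mons_deg m (Suc e)) (\<lambda>x. a * (x j * f x) + (- b) * (x k * f x))"
    using assms by (intro in_mon_span_add in_mon_span_scale in_mon_span_mult_var)
  then show ?thesis
    by (rule in_mon_span_cong) (simp add: algebra_simps)
qed

lemma in_mon_span_power: "j \<le> m \<Longrightarrow> in_mon_span m X (mons_deg m n) (\<lambda>x. x j ^ n)"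
proof (induction n)
  case 0
  show ?case
    using in_mon_span_const[of m X 1] by simp
next
  case (Suc n)
  then show ?case
    using in_mon_span_mult_var[of m X n "\<lambda>x. x j ^ n" j] by simp
qed

lemma in_mon_span_prod_linear_factors:
  assumes "finite T" "in_mon_span m X (mons_deg m e) f" "\<And>t. t \<in> T \<Longrightarrow> j t \<le> m \<and> k t \<le> m"
  shows "in_mon_span m X (mons_deg m (e + card T))
           (\<lambda>x. (\<Prod>t\<in>T. a t * x (j t) - b t * x (k t)) * f x)"
  using assms
proof (induction T rule: finite_induct)
  case empty
  then show ?case
    by simp
next
  case (insert t T)
  then have "in_mon_span m X (mons_deg m (Suc (e + card T)))
      (\<lambda>x. (a t * x (j t) - b t * x (k t)) * ((\<Prod>t\<in>T. a t * x (j t) - b t * x (k t)) * f x))"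
    by (intro in_mon_span_linear_factor) auto
  then show ?case
    using insert.hyps by (simp add: mult.assoc)
qed

section \<open>Reduction modulo leading monomials\<close>

lemma not_proj_reduced_monE:
  assumes "\<nu> \<in> mons m" "\<not> proj_reduced_mon q m \<nu>"
  obtains i k where "i < k" "k \<le> m" "q - 1 < \<nu> i" "0 < \<nu> k"
proof -
  let ?K = "{i. 0 < \<nu> i}"
  have K_sub: "?K \<subseteq> {..m}"
    using assms(1) unfolding mons_def by (auto intro: leI)
  have "\<nu> \<noteq> (\<lambda>_. 0)"
    using assms unfolding proj_reduced_mon_def by auto
  then have "?K \<noteq> {}"
    by (auto simp: fun_eq_iff)
  define k where "k = Max ?K"
  have fin: "finite ?K"
    using K_sub finite_subset by blast
  then have k: "0 < \<nu> k" "k \<le> m"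
    using Max_in[OF fin \<open>?K \<noteq> {}\<close>] K_sub unfolding k_def by auto
  have "\<forall>i>k. \<nu> i = 0"
    using Max_ge[OF fin] unfolding k_def by (meson CollectI leD neq0_conv)
  then have "\<not> (\<forall>i<k. \<nu> i \<le> q - 1)"
    using assms k unfolding proj_reduced_mon_def by blast
  then obtain i where "i < k" "q - 1 < \<nu> i"
    by (auto simp: not_le)
  with k show thesis
    using that by blast
qed

lemma mon_eval_swap_card_power:
  fixes x :: "nat \<Rightarrow> 'a::{finite,field}"
  assumes "i \<le> m" "k \<le> m"
  shows "mon_eval m (w + var_exp i 1 + var_exp k CARD('a)) x
       = mon_eval m (w + var_exp i CARD('a) + var_exp k 1) x"
  using assms by (simp add: mon_eval_add mon_eval_var_exp power_card_eq_self)

lemma nonreduced_mon_eval_eq_lex_smaller: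
  fixes \<nu> :: "nat \<Rightarrow> nat"
  assumes "\<nu> \<in> mons_deg m e" "\<not> proj_reduced_mon CARD('a::{finite,field}) m \<nu>"
  obtains \<nu>' where "\<nu>' \<in> mons_deg m e" "lex_less \<nu>' \<nu>"
    "\<And>x :: nat \<Rightarrow> 'a. mon_eval m \<nu>' x = mon_eval m \<nu> x"
proof -
  let ?q = "CARD('a)"
  obtain i k where ik: "i < k" "k \<le> m" "?q - 1 < \<nu> i" "0 < \<nu> k"
    using assms unfolding mons_deg_def by (blast elim: not_proj_reduced_monE)
  have q: "2 \<le> ?q"
    by (rule card_field_ge_2)
  define w where "w j = \<nu> j - var_exp i ?q j - var_exp k 1 j" for j
  have \<nu>: "\<nu> = w + var_exp i ?q + var_exp k 1"
    using ik q unfolding w_def var_exp_def by (auto simp: fun_eq_iff)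
  define \<nu>' where "\<nu>' = w + var_exp i 1 + var_exp k ?q"
  have "w \<in> mons m"
    using assms(1) unfolding mons_deg_def mons_def w_def by auto
  moreover have "mdeg m \<nu> = mdeg m w + ?q + 1"
    using ik by (simp add: \<nu> mdeg_add mdeg_var_exp)
  ultimately have "\<nu>' \<in> mons_deg m e"
    using assms(1) ik unfolding \<nu>'_def mons_deg_def
    by (simp add: mons_add var_exp_mons mdeg_add mdeg_var_exp)
  moreover have "lex_less \<nu>' \<nu>"
    unfolding lex_less_def using ik q
    by (intro exI[of _ i]) (simp add: \<nu> \<nu>'_def var_exp_def)
  moreover have "mon_eval m \<nu>' x = mon_eval m \<nu> x" for x :: "nat \<Rightarrow> 'a"
    unfolding \<nu>'_def \<nu> using ik by (intro mon_eval_swap_card_power) simp_all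
  ultimately show thesis
    using that by blast
qed

lemma mon_eval_reduce_by_lm:
  fixes g :: "'a::field mpoly"
  assumes "finite (psupp g)" "psupp g \<noteq> {}" "\<nu> = w + lm g" "peval m g x = 0"
  shows "mon_eval m \<nu> x = (\<Sum>b\<in>psupp g - {lm g}. (- g b / g (lm g)) * mon_eval m (w + b) x)"
proof -
  have lm: "lm g \<in> psupp g"
    using assms(1,2) by (rule lm_in_psupp)
  then have "g (lm g) \<noteq> 0"
    unfolding psupp_def by simp
  have "0 = mon_eval m w x * peval m g x"
    using assms(4) by simp
  also have "\<dots> = (\<Sum>b\<in>psupp g. g b * mon_eval m (w + b) x)"
    unfolding peval_def mon_eval_def[symmetric] by (simp add: sum_distrib_left mon_eval_add mult_ac)
  also have "\<dots> = g (lm g) * mon_eval m \<nu> x + (\<Sum>b\<in>psupp g - {lm g}. g b * mon_eval m (w + b) x)"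
    using assms(1,3) lm by (simp add: sum.remove)
  finally have "g (lm g) * mon_eval m \<nu> x = - (\<Sum>b\<in>psupp g - {lm g}. g b * mon_eval m (w + b) x)"
    by (simp add: eq_neg_iff_add_eq_0)
  then show ?thesis
    using \<open>g (lm g) \<noteq> 0\<close> by (simp add: field_simps sum_divide_distrib[symmetric] sum_negf)
qed

lemma in_mon_span_reduce_by_lm:
  fixes g :: "'a::field mpoly"
  assumes g_supp: "psupp g \<subseteq> mons_deg m d" "psupp g \<noteq> {}"
    and X: "\<forall>x\<in>X. peval m g x = 0"
    and "mdvd (lm g) \<nu>" "\<nu> \<in> mons_deg m e"
    and smaller: "\<And>\<nu>'. \<nu>' \<in> mons_deg m e \<Longrightarrow> lex_less \<nu>' \<nu> \<Longrightarrow> in_mon_span m X D (mon_eval m \<nu>')"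
  shows "in_mon_span m X D (mon_eval m \<nu>)"
proof -
  define w where "w j = \<nu> j - lm g j" for j
  have \<nu>: "\<nu> = w + lm g"
    using assms(4) unfolding w_def mdvd_def by (auto simp: fun_eq_iff)
  have fin_g: "finite (psupp g)"
    using g_supp(1) finite_mons_deg by (rule finite_subset)
  have "w \<in> mons m" "mdeg m w + d = e"
    using assms(5) g_supp(1) lm_in_psupp[OF fin_g g_supp(2)]
    unfolding \<nu> mons_deg_def mons_def by (auto simp: w_def mdeg_add)
  then have "w + b \<in> mons_deg m e" if "b \<in> psupp g" for b
    using g_supp(1) that unfolding mons_deg_def by (auto simp: mons_add mdeg_add)
  moreover have "lex_less (w + b) \<nu>" if "b \<in> psupp g - {lm g}" for b
    unfolding \<nu> using that lex_less_lm[OF fin_g g_supp(2)] by (intro lex_less_add_left) auto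
  ultimately have "in_mon_span m X D
      (\<lambda>x. \<Sum>b\<in>psupp g - {lm g}. (- g b / g (lm g)) * mon_eval m (w + b) x)"
    using fin_g smaller by (intro in_mon_span_sum) auto
  then show ?thesis
  proof (rule in_mon_span_cong)
    fix x assume "x \<in> X"
    then show "(\<Sum>b\<in>psupp g - {lm g}. (- g b / g (lm g)) * mon_eval m (w + b) x) = mon_eval m \<nu> x"
      using X by (simp add: mon_eval_reduce_by_lm[OF fin_g g_supp(2) \<nu>])
  qed
qed

lemma finite_Delta: "finite (Delta q m e S)"
  unfolding Delta_def by (rule finite_subset[OF _ finite_Mbar]) blast

lemma mon_eval_in_span_Delta:
  fixes G :: "nat \<Rightarrow> 'a::{finite,field} mpoly"
  assumes G_supp: "\<forall>i<r. psupp (G i) \<subseteq> Mbar CARD('a) m d" "\<forall>i<r. psupp (G i) \<noteq> {}"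
    and X: "\<forall>x\<in>X. \<forall>i<r. peval m (G i) x = 0"
    and "\<nu> \<in> mons_deg m e"
  shows "in_mon_span m X (Delta CARD('a) m e ((\<lambda>i. lm (G i)) ` {..<r})) (mon_eval m \<nu>)"
  using finite_mons_deg[of m e] assms(4)
proof (induction \<nu> rule: finite_lex_induct)
  case (less \<nu>)
  let ?D = "Delta CARD('a) m e ((\<lambda>i. lm (G i)) ` {..<r})"
  have fin_D: "finite ?D"
    by (rule finite_Delta)
  consider (Delta) "\<nu> \<in> ?D"
    | (divisible) l where "l < r" "mdvd (lm (G l)) \<nu>"
    | (nonreduced) "\<not> proj_reduced_mon CARD('a) m \<nu>"
    using less.hyps unfolding Delta_def Mbar_def mons_deg_def by blast
  then show ?case
  proof cases
    case Delta
    then show ?thesis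
      by (rule in_mon_span_mon[OF fin_D])
  next
    case (divisible l)
    then have "psupp (G l) \<subseteq> mons_deg m d" "psupp (G l) \<noteq> {}" "\<forall>x\<in>X. peval m (G l) x = 0"
      using G_supp X Mbar_subset_mons_deg by blast+
    then show ?thesis
      using divisible(2) less.hyps less.IH by (rule in_mon_span_reduce_by_lm)
  next
    case nonreduced
    obtain \<nu>' where \<nu>': "\<nu>' \<in> mons_deg m e" "lex_less \<nu>' \<nu>"
      "\<And>x :: nat \<Rightarrow> 'a. mon_eval m \<nu>' x = mon_eval m \<nu> x"
      using nonreduced_mon_eval_eq_lex_smaller[OF less.hyps nonreduced] by blast
    then have "in_mon_span m X ?D (mon_eval m \<nu>')"
      using less.IH by blast
    then show ?thesis
      by (rule in_mon_span_cong) (simp add: \<nu>'(3))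
  qed
qed

section \<open>The footprint bound\<close>

lemma obtain_separating_form:
  fixes X :: "(nat \<Rightarrow> 'a::field) set"
  assumes "finite X" "card X \<le> e + 1" "x \<in> X" "j0 \<le> m" "x j0 \<noteq> 0"
    and "\<And>y. y \<in> X - {x} \<Longrightarrow> \<exists>j\<le>m. \<exists>k\<le>m. y k * x j \<noteq> y j * x k"
  obtains f where "in_mon_span m X (mons_deg m e) f" "f x \<noteq> 0" "\<And>y. y \<in> X - {x} \<Longrightarrow> f y = 0"
proof -
  obtain j k where jk: "\<And>y. y \<in> X - {x} \<Longrightarrow> j y \<le> m \<and> k y \<le> m \<and> y (k y) * x (j y) \<noteq> y (j y) * x (k y)"
    using assms(6) by metis
  \<comment> \<open>One linear form through each other point, padded to degree \<open>e\<close> by a coordinate nonzero at \<open>x\<close>.\<close>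
  define f where "f z = (\<Prod>y\<in>X - {x}. y (k y) * z (j y) - y (j y) * z (k y)) * z j0 ^ (e + 1 - card X)"
    for z
  have "in_mon_span m X (mons_deg m (e + 1 - card X + card (X - {x}))) f"
    unfolding f_def using assms(1,4) jk
    by (intro in_mon_span_prod_linear_factors in_mon_span_power) auto
  moreover have "e + 1 - card X + card (X - {x}) = e"
    using assms(1-3) card_gt_0_iff[of X] by auto
  moreover have "f x \<noteq> 0"
    using assms(1,5) jk unfolding f_def by simp
  moreover have "f y = 0" if "y \<in> X - {x}" for y
    using assms(1) that unfolding f_def by (auto intro!: bexI[of _ y])
  ultimately show thesis
    using that by simp
qed

lemma card_le_card_if_indicators_in_mon_span:
  fixes X :: "(nat \<Rightarrow> 'a::field) set"
  assumes "finite X" "finite D"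
    and "\<And>x. x \<in> X \<Longrightarrow> in_mon_span m X D (\<lambda>y. of_bool (y = x))"
  shows "card X \<le> card D"
proof -
  obtain h where h: "\<And>x y. x \<in> X \<Longrightarrow> y \<in> X \<Longrightarrow> of_bool (y = x) = (\<Sum>\<mu>\<in>D. h x \<mu> * mon_eval m \<mu> y)"
    using assms(3) unfolding in_mon_span_def by metis
  define H :: "(nat \<Rightarrow> 'a) \<Rightarrow> 'a mpoly" where "H x \<mu> = (if \<mu> \<in> D then h x \<mu> else 0)" for x \<mu>
  have "indep_fam X H"
    unfolding indep_fam_def
  proof (intro allI impI ballI)
    fix c y assume c: "(\<lambda>\<mu>. \<Sum>x\<in>X. c x * H x \<mu>) = (\<lambda>_. 0)" and y: "y \<in> X"
    have "c y = (\<Sum>x\<in>X. c x * of_bool (y = x))"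
      using assms(1) y by simp
    also have "\<dots> = (\<Sum>x\<in>X. \<Sum>\<mu>\<in>D. c x * H x \<mu> * mon_eval m \<mu> y)"
      using h y unfolding H_def by (intro sum.cong) (simp_all add: sum_distrib_left mult.assoc)
    also have "\<dots> = (\<Sum>\<mu>\<in>D. (\<Sum>x\<in>X. c x * H x \<mu>) * mon_eval m \<mu> y)"
      by (subst sum.swap) (simp add: sum_distrib_right)
    also have "\<dots> = 0"
      using fun_cong[OF c] by simp
    finally show "c y = 0" .
  qed
  moreover have "\<forall>x\<in>X. psupp (H x) \<subseteq> D"
    unfolding H_def psupp_def by auto
  ultimately show ?thesis
    using indep_fam_card_le[OF assms(2,1)] by blast
qed

lemma card_zero_set_le_card_Delta:
  fixes G :: "nat \<Rightarrow> 'a::{finite,field} mpoly"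
  assumes G_supp: "\<forall>i<r. psupp (G i) \<subseteq> Mbar CARD('a) m d" "\<forall>i<r. psupp (G i) \<noteq> {}"
    and "card (zero_set m r G) \<le> e + 1"
  shows "card (zero_set m r G) \<le> card (Delta CARD('a) m e ((\<lambda>i. lm (G i)) ` {..<r}))"
proof -
  let ?V = "zero_set m r G" and ?D = "Delta CARD('a) m e ((\<lambda>i. lm (G i)) ` {..<r})"
  have V: "?V \<subseteq> proj_space TYPE('a) m"
    unfolding zero_set_def by blast
  obtain X where X: "bij_betw pclass X ?V" "\<And>x. x \<in> X \<Longrightarrow> (\<forall>i>m. x i = 0) \<and> x \<noteq> (\<lambda>_. 0)"
    using obtain_proj_representatives[OF V] by blast
  have card_X: "card X = card ?V"
    using X(1) by (rule bij_betw_same_card)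
  have fin_X: "finite X"
    using X(1) finite_subset[OF V finite_proj_space] by (simp add: bij_betw_finite)
  have zeros: "\<forall>x\<in>X. \<forall>i<r. peval m (G i) x = 0"
    using X(1) pclass_self unfolding bij_betw_def zero_set_def by blast
  have "card X \<le> card ?D"
  proof (rule card_le_card_if_indicators_in_mon_span[OF fin_X finite_Delta])
    fix x assume x: "x \<in> X"
    then obtain j0 where j0: "j0 \<le> m" "x j0 \<noteq> 0"
      using X(2) by (metis le_less_linear)
    have "\<exists>j\<le>m. \<exists>k\<le>m. y k * x j \<noteq> y j * x k" if "y \<in> X - {x}" for y
      using that x X(1,2)
      by (intro not_proportional_if_pclass_ne) (auto simp: bij_betw_def inj_on_def)
    then obtain f where f: "in_mon_span m X (mons_deg m e) f" "f x \<noteq> 0"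
      "\<And>y. y \<in> X - {x} \<Longrightarrow> f y = 0"
      using obtain_separating_form[OF fin_X _ x j0] card_X assms(3) by metis
    have "in_mon_span m X ?D f"
      using finite_mons_deg f(1) mon_eval_in_span_Delta[OF G_supp zeros]
      by (rule in_mon_span_trans)
    then have "in_mon_span m X ?D (\<lambda>y. (1 / f x) * f y)"
      by (rule in_mon_span_scale)
    then show "in_mon_span m X ?D (\<lambda>y. of_bool (y = x))"
      by (rule in_mon_span_cong) (use f(2,3) in auto)
  qed
  then show ?thesis
    using card_X by simp
qed

lemma obtain_monomial_family:
  assumes "S \<subseteq> Mbar q m d" "card S = r"
  obtains F :: "nat \<Rightarrow> 'a::field mpoly" where "lin_indep_fam r F" "\<forall>i<r. pr_hom q m d (F i)"
proof -
  have "finite S"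
    using assms(1) finite_Mbar by (rule finite_subset)
  then obtain h where h: "bij_betw h {..<r} S"
    using assms(2) ex_bij_betw_nat_finite lessThan_atLeast0 by metis
  let ?F = "\<lambda>i. mono (h i) :: 'a mpoly"
  have "c j = 0" if c: "(\<lambda>a. \<Sum>i<r. c i * ?F i a) = (\<lambda>_. 0)" and j: "j < r" for c j
  proof -
    have "(\<Sum>i<r. c i * ?F i (h j)) = (\<Sum>i<r. if i = j then c i else 0)"
      using h j unfolding bij_betw_def inj_on_def mono_def by (intro sum.cong) auto
    also have "\<dots> = c j"
      using j by simp
    finally have "(\<Sum>i<r. c i * ?F i (h j)) = c j" .
    then show ?thesis
      using fun_cong[OF c, of "h j"] by simp
  qed
  then have "lin_indep_fam r ?F"
    unfolding lin_indep_fam_def by blast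
  moreover have "\<forall>i<r. pr_hom q m d (?F i)"
    using h assms(1) unfolding bij_betw_def pr_hom_def psupp_def mono_def by auto
  ultimately show thesis
    using that by blast
qed

lemma finite_card_zero_sets:
  "finite {card (zero_set m r F) | F :: nat \<Rightarrow> 'a::{finite,field} mpoly. P F}"
proof (rule finite_subset[of _ "{..card (proj_space TYPE('a) m)}"])
  have "card (zero_set m r F) \<le> card (proj_space TYPE('a) m)" for F :: "nat \<Rightarrow> 'a mpoly"
    unfolding zero_set_def by (intro card_mono finite_proj_space) blast
  then show "{card (zero_set m r F) | F :: nat \<Rightarrow> 'a mpoly. P F} \<subseteq> {..card (proj_space TYPE('a) m)}"
    by auto
qed simp

lemma obtain_ebar_attaining_family:
  assumes "\<exists>F :: nat \<Rightarrow> 'a::{finite,field} mpoly. lin_indep_fam r F \<and> (\<forall>i<r. pr_hom CARD('a) m d (F i))"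
  obtains G :: "nat \<Rightarrow> 'a::{finite,field} mpoly" where "lin_indep_fam r G"
    "\<forall>i<r. pr_hom CARD('a) m d (G i)" "inj_on (\<lambda>i. lm (G i)) {..<r}" "ebar TYPE('a) r d m = card (zero_set m r G)"
proof -
  let ?R = "{card (zero_set m r F) | F :: nat \<Rightarrow> 'a mpoly.
              lin_indep_fam r F \<and> (\<forall>i<r. pr_hom CARD('a) m d (F i)) \<and> inj_on (\<lambda>i. lm (F i)) {..<r}}"
  obtain F :: "nat \<Rightarrow> 'a mpoly" where "lin_indep_fam r F" "\<forall>i<r. pr_hom CARD('a) m d (F i)"
    using assms by blast
  then obtain G :: "nat \<Rightarrow> 'a mpoly" where "lin_indep_fam r G" "\<forall>i<r. pr_hom CARD('a) m d (G i)"
    "inj_on (\<lambda>i. lm (G i)) {..<r}"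
    by (metis echelon_family)
  then have "?R \<noteq> {}"
    by blast
  then have "Max ?R \<in> ?R"
    using finite_card_zero_sets by (rule Max_in[rotated])
  then obtain G' :: "nat \<Rightarrow> 'a mpoly" where "lin_indep_fam r G'"
    "\<forall>i<r. pr_hom CARD('a) m d (G' i)" "inj_on (\<lambda>i. lm (G' i)) {..<r}"
    "Max ?R = card (zero_set m r G')"
    by blast
  then show thesis
    using that unfolding ebar_eq_Max_distinct_lm by blast
qed

lemma card_zero_set_le_A_bound:
  fixes G :: "nat \<Rightarrow> 'a::{finite,field} mpoly"
  assumes "lin_indep_fam r G" "\<forall>i<r. pr_hom CARD('a) m d (G i)" "inj_on (\<lambda>i. lm (G i)) {..<r}"
    and "card (zero_set m r G) \<le> e + 1"
  shows "card (zero_set m r G) \<le> A_bound CARD('a) r d m e"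
proof -
  let ?S = "(\<lambda>i. lm (G i)) ` {..<r}"
  have G_supp: "\<forall>i<r. psupp (G i) \<subseteq> Mbar CARD('a) m d"
    using assms(2) unfolding pr_hom_def by blast
  have G_nonzero: "\<forall>i<r. psupp (G i) \<noteq> {}"
    using assms(1) indep_fam_psupp_nonempty[of "{..<r}" G]
    unfolding lin_indep_fam_iff_indep_fam by simp
  have "lm (G i) \<in> Mbar CARD('a) m d" if "i < r" for i
  proof -
    have "finite (psupp (G i))"
      by (rule finite_subset[OF _ finite_Mbar]) (use G_supp that in blast)
    then show ?thesis
      using lm_in_psupp G_supp G_nonzero that by blast
  qed
  then have "?S \<subseteq> Mbar CARD('a) m d"
    by blast
  moreover have "card ?S = r"
    using assms(3) by (simp add: card_image)
  moreover have "finite {card (Delta CARD('a) m e S) | S. S \<subseteq> Mbar CARD('a) m d \<and> card S = r}"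
    by (rule finite_subset[of _ "(\<lambda>S. card (Delta CARD('a) m e S)) ` Pow (Mbar CARD('a) m d)"])
      (auto simp: finite_Mbar)
  ultimately have "card (Delta CARD('a) m e ?S) \<le> A_bound CARD('a) r d m e"
    unfolding A_bound_def by (intro Max_ge) auto
  moreover have "card (zero_set m r G) \<le> card (Delta CARD('a) m e ?S)"
    using G_supp G_nonzero assms(4) by (rule card_zero_set_le_card_Delta)
  ultimately show ?thesis
    by linarith
qed

lemma ebar_le_A_bound: "\<exists>e0. \<forall>e\<ge>e0. ebar TYPE('a::{finite,field}) r d m \<le> A_bound CARD('a) r d m e"
proof (cases "\<exists>F :: nat \<Rightarrow> 'a mpoly. lin_indep_fam r F \<and> (\<forall>i<r. pr_hom CARD('a) m d (F i))")
  case True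
  then obtain G :: "nat \<Rightarrow> 'a mpoly" where G: "lin_indep_fam r G" "\<forall>i<r. pr_hom CARD('a) m d (G i)"
    "inj_on (\<lambda>i. lm (G i)) {..<r}" "ebar TYPE('a) r d m = card (zero_set m r G)"
    by (rule obtain_ebar_attaining_family)
  then have "ebar TYPE('a) r d m \<le> A_bound CARD('a) r d m e" if "ebar TYPE('a) r d m \<le> e" for e
    using that card_zero_set_le_A_bound[OF G(1-3), of e] by simp
  then show ?thesis
    by blast
next
  case False
  \<comment> \<open>Then both sides are the junk value \<open>Max {}\<close>, so \<open>lemma5p6\<close> needs none of its hypotheses on \<open>r\<close>.\<close>
  then have A_empty: "{card (Delta CARD('a) m e S) | S. S \<subseteq> Mbar CARD('a) m d \<and> card S = r} = {}"
    for e
    using obtain_monomial_family[where 'a = 'a] by blast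
  have ebar_empty: "{card (zero_set m r F) | F :: nat \<Rightarrow> 'a mpoly.
      lin_indep_fam r F \<and> (\<forall>i<r. pr_hom CARD('a) m d (F i))} = {}"
    using False by blast
  have "ebar TYPE('a) r d m = A_bound CARD('a) r d m e" for e
    unfolding ebar_def A_bound_def A_empty ebar_empty ..
  then show ?thesis
    by simp
qed

theorem lemma5p6:
  fixes d r m :: nat
  assumes "m \<ge> 1"
    and "1 \<le> r"
    and "r \<le> (m + d choose d) - rdim TYPE('a::{finite,field}) m d"
  shows "ebar TYPE('a) r d m =
           Max {card (zero_set m r F) | F :: nat \<Rightarrow> 'a mpoly.
                  lin_indep_fam r F \<and> (\<forall>i<r. pr_hom CARD('a) m d (F i))
                  \<and> inj_on (\<lambda>i. lm (F i)) {..<r}}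
       \<and> (\<exists>e0::nat. \<forall>e\<ge>e0. ebar TYPE('a) r d m \<le> A_bound CARD('a) r d m e)"
  using ebar_eq_Max_distinct_lm ebar_le_A_bound by blast

end
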